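(* Let $\eta_l\in(0,1]$ and $M\in[0,1]$ be fixed. For $\beta\in[0,1]$ put $r(\beta):=1-\eta_l+M(1-\beta)$, $\zeta(\beta):=M(1-\beta)^2$ and $$\lambda_1(\beta):=\frac{r(\beta)+\beta+\sqrt{(r(\beta)-\beta)^2-4\zeta(\beta)}}{2},$$ where for a negative radicand $D$ the square root is $i\sqrt{|D|}$. Then $$\operatorname*{argmin}_{\beta\in[0,1]}|\lambda_1(\beta)|=\begin{cases}1-\dfrac{\eta_l}{(1-\sqrt M)^2}&\text{if }0\le M\le(1-\sqrt{\eta_l})^2,\\[4pt] 0&\text{if }(1-\sqrt{\eta_l})^2<M\le 1-\eta_l,\\[4pt] 1-\dfrac{\eta_l}{(1+\sqrt M)^2}&\text{if }1-\eta_l\le M\le1.\end{cases}$$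
   Context: In the paper, $\eta_l=\sigma_l^2/\|A\|_F^2$ for the $l$-th largest singular value $\sigma_l$ of a matrix $A$, and $\lambda_1$ is the eigenvalue of larger modulus of the $2\times2$ matrix $\begin{bmatrix} r&\zeta\\-1&\beta\end{bmatrix}$; $|\cdot|$ denotes the modulus of a complex number. *)

theory Defs
  imports "HOL-Analysis.Analysis"
begin

definition r_fun :: "real \<Rightarrow> real \<Rightarrow> real \<Rightarrow> real" where
  "r_fun eta M beta = 1 - eta + M * (1 - beta)"

definition zeta_fun :: "real \<Rightarrow> real \<Rightarrow> real" where
  "zeta_fun M beta = M * (1 - beta)^2"

definition sqrt_rad :: "real \<Rightarrow> complex" where
  "sqrt_rad D = (if D \<ge> 0 then complex_of_real (sqrt D) else \<i> * complex_of_real (sqrt \<bar>D\<bar>))"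

definition lambda1 :: "real \<Rightarrow> real \<Rightarrow> real \<Rightarrow> complex" where
  "lambda1 eta M beta =
     (complex_of_real (r_fun eta M beta + beta)
      + sqrt_rad ((r_fun eta M beta - beta)^2 - 4 * zeta_fun M beta)) / 2"

end

theory Submission
  imports Defs
begin

text \<open>
  \<open>\<lambda>\<^sub>1(\<beta>)\<close> is the larger root of \<open>z\<^sup>2 - T z + D\<close>, where \<open>T = r + \<beta>\<close> and \<open>D = r \<beta> + \<zeta>\<close> are the
  trace and determinant of the iteration matrix. Both are affine in \<open>\<beta>\<close>, \<open>T\<close> is nondecreasing and
  nonnegative, and \<open>D\<close> is monotone in the direction given by the sign of \<open>1 - \<eta> - M\<close>. Since
  \<open>|\<lambda>\<^sub>1| \<ge> T/2\<close> and \<open>|\<lambda>\<^sub>1| \<ge> \<surd>D\<close>, with equality in both when the discriminant vanishes, a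
  point \<open>\<beta>\<^sub>0\<close> with a double root \<open>c\<close> is a minimiser as soon as one of the two bounds
  grows on each side of \<open>\<beta>\<^sub>0\<close>. The double roots are at \<open>\<beta>\<^sub>0 = 1 - \<eta>/(1 \<plusminus> \<surd>M)\<^sup>2\<close> with
  \<open>c = 1 - \<eta>/(1 \<plusminus> \<surd>M)\<close>; for small \<open>M\<close> and \<open>\<beta> < \<beta>\<^sub>0\<close> neither bound suffices, and one uses
  instead that \<open>c\<close> lies between the two real roots. In the middle range the roots are non-real
  already at \<open>\<beta> = 0\<close>, where \<open>|\<lambda>\<^sub>1| = \<surd>D = \<surd>M\<close>, and \<open>D\<close> only grows with \<open>\<beta>\<close>.
\<close>

definition larger_root :: "real \<Rightarrow> real \<Rightarrow> complex" where
  "larger_root S P = (complex_of_real S + sqrt_rad (S\<^sup>2 - 4 * P)) / 2"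

lemma larger_root_real:
  "4 * P \<le> S\<^sup>2 \<Longrightarrow> larger_root S P = complex_of_real ((S + sqrt (S\<^sup>2 - 4 * P)) / 2)"
  by (simp add: larger_root_def sqrt_rad_def)

lemma cmod_larger_root_nonreal:
  assumes "S\<^sup>2 \<le> 4 * P"
  shows "cmod (larger_root S P) = sqrt P"
proof -
  have "larger_root S P = Complex (S / 2) (sqrt (4 * P - S\<^sup>2) / 2)"
    using assms by (auto simp: larger_root_def sqrt_rad_def complex_eq_iff)
  moreover have "(S / 2)\<^sup>2 + (sqrt (4 * P - S\<^sup>2) / 2)\<^sup>2 = P"
    using assms by (simp add: field_simps)
  ultimately show ?thesis
    by (simp add: cmod_def)
qed

lemma half_le_Re_larger_root: "S / 2 \<le> Re (larger_root S P)"
  by (simp add: larger_root_def sqrt_rad_def)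

lemma root_le_Re_larger_root:
  assumes "c\<^sup>2 - S * c + P \<le> 0"
  shows "c \<le> Re (larger_root S P)"
proof -
  have "(2 * c - S)\<^sup>2 \<le> S\<^sup>2 - 4 * P"
    using assms by (simp add: power2_eq_square algebra_simps)
  then have "2 * c - S \<le> sqrt (S\<^sup>2 - 4 * P)"
    by (rule real_le_rsqrt)
  moreover have "4 * P \<le> S\<^sup>2"
    using \<open>(2 * c - S)\<^sup>2 \<le> _\<close> by (smt (verit) zero_le_power2)
  ultimately show ?thesis
    by (simp add: larger_root_real)
qed

lemma sqrt_le_cmod_larger_root:
  assumes "0 \<le> S"
  shows "sqrt P \<le> cmod (larger_root S P)"
proof (cases "4 * P \<le> S\<^sup>2")
  case True
  define d where "d = sqrt (S\<^sup>2 - 4 * P)"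
  have "d\<^sup>2 = S\<^sup>2 - 4 * P" "0 \<le> S * d"
    using True assms by (simp_all add: d_def)
  then have "P \<le> ((S + d) / 2)\<^sup>2"
    using True by (simp add: power2_eq_square field_simps)
  then have "sqrt P \<le> (S + d) / 2"
    using True assms by (intro real_le_lsqrt) (auto simp: d_def)
  then show ?thesis
    unfolding larger_root_real[OF True] norm_of_real d_def[symmetric] by linarith
next
  case False
  then show ?thesis
    by (simp add: cmod_larger_root_nonreal)
qed

definition trace_fun :: "real \<Rightarrow> real \<Rightarrow> real \<Rightarrow> real" where
  "trace_fun eta M beta = r_fun eta M beta + beta"

definition det_fun :: "real \<Rightarrow> real \<Rightarrow> real \<Rightarrow> real" where
  "det_fun eta M beta = r_fun eta M beta * beta + zeta_fun M beta"

lemma lambda1_eq_larger_root: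
  "lambda1 eta M beta = larger_root (trace_fun eta M beta) (det_fun eta M beta)"
proof -
  have "(r_fun eta M beta - beta)\<^sup>2 - 4 * zeta_fun M beta
          = (trace_fun eta M beta)\<^sup>2 - 4 * det_fun eta M beta"
    by (simp add: trace_fun_def det_fun_def power2_eq_square algebra_simps)
  then show ?thesis
    by (simp add: lambda1_def larger_root_def trace_fun_def)
qed

lemma trace_fun_eq: "trace_fun eta M beta = 2 - eta - (1 - M) * (1 - beta)"
  by (simp add: trace_fun_def r_fun_def algebra_simps)

lemma det_fun_eq: "det_fun eta M beta = 1 - eta - (1 - eta - M) * (1 - beta)"
  by (simp add: det_fun_def r_fun_def zeta_fun_def power2_eq_square algebra_simps)

lemma trace_fun_mono: "M \<le> 1 \<Longrightarrow> beta \<le> beta' \<Longrightarrow> trace_fun eta M beta \<le> trace_fun eta M beta'"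
  by (simp add: trace_fun_eq mult_left_mono)

lemma trace_fun_nonneg:
  assumes "eta \<le> 1" "0 \<le> M" "M \<le> 1" "0 \<le> beta"
  shows "0 \<le> trace_fun eta M beta"
proof -
  have "trace_fun eta M 0 \<le> trace_fun eta M beta"
    using assms by (intro trace_fun_mono)
  moreover have "0 \<le> trace_fun eta M 0"
    using assms by (simp add: trace_fun_eq)
  ultimately show ?thesis
    by linarith
qed

lemma det_fun_diff:
  "det_fun eta M beta' - det_fun eta M beta = (1 - eta - M) * (beta' - beta)"
  by (simp add: det_fun_eq algebra_simps)

lemma trace_det_at_double_root:
  assumes "\<sigma>\<^sup>2 = M" "1 + \<sigma> \<noteq> 0"
  shows "trace_fun eta M (1 - eta / (1 + \<sigma>)\<^sup>2) = 2 * (1 - eta / (1 + \<sigma>))"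
    and "det_fun eta M (1 - eta / (1 + \<sigma>)\<^sup>2) = (1 - eta / (1 + \<sigma>))\<^sup>2"
proof -
  define w where "w = 1 / (1 + \<sigma>)"
  have \<sigma>w: "\<sigma> * w = 1 - w"
    using assms(2) by (simp add: w_def field_simps)
  have "eta / (1 + \<sigma>)\<^sup>2 = eta * w\<^sup>2" "eta / (1 + \<sigma>) = eta * w"
    by (simp_all add: w_def power2_eq_square)
  moreover have "2 - eta - (1 - M) * (eta * w\<^sup>2) = 2 * (1 - eta * w)"
    unfolding assms(1)[symmetric] using \<sigma>w by algebra
  moreover have "1 - eta - (1 - eta - M) * (eta * w\<^sup>2) = (1 - eta * w)\<^sup>2"
    unfolding assms(1)[symmetric] using \<sigma>w by algebra
  ultimately show "trace_fun eta M (1 - eta / (1 + \<sigma>)\<^sup>2) = 2 * (1 - eta / (1 + \<sigma>))"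
    and "det_fun eta M (1 - eta / (1 + \<sigma>)\<^sup>2) = (1 - eta / (1 + \<sigma>))\<^sup>2"
    by (simp_all add: trace_fun_eq det_fun_eq)
qed

lemma cmod_lambda1_at_double_root:
  assumes "\<sigma>\<^sup>2 = M" "1 + \<sigma> \<noteq> 0"
  shows "cmod (lambda1 eta M (1 - eta / (1 + \<sigma>)\<^sup>2)) = \<bar>1 - eta / (1 + \<sigma>)\<bar>"
proof -
  define c where "c = 1 - eta / (1 + \<sigma>)"
  have "lambda1 eta M (1 - eta / (1 + \<sigma>)\<^sup>2) = larger_root (2 * c) (c\<^sup>2)"
    by (simp add: lambda1_eq_larger_root trace_det_at_double_root[OF assms] c_def)
  moreover have "cmod (larger_root (2 * c) (c\<^sup>2)) = \<bar>c\<bar>"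
    by (simp add: cmod_larger_root_nonreal power_mult_distrib)
  ultimately show ?thesis
    by (simp add: c_def)
qed

lemma le_cmod_lambda1_if_le_half_trace:
  assumes "2 * c \<le> trace_fun eta M beta"
  shows "c \<le> cmod (lambda1 eta M beta)"
proof -
  have "c \<le> Re (lambda1 eta M beta)"
    using assms half_le_Re_larger_root[of "trace_fun eta M beta" "det_fun eta M beta"]
    by (simp add: lambda1_eq_larger_root)
  also have "\<dots> \<le> cmod (lambda1 eta M beta)"
    by (rule complex_Re_le_cmod)
  finally show ?thesis .
qed

lemma le_cmod_lambda1_if_sq_le_det:
  assumes "eta \<le> 1" "0 \<le> M" "M \<le> 1" "0 \<le> beta" "c\<^sup>2 \<le> det_fun eta M beta"
  shows "c \<le> cmod (lambda1 eta M beta)"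
proof -
  have "c \<le> sqrt (det_fun eta M beta)"
    using assms(5) by (rule real_le_rsqrt)
  also have "\<dots> \<le> cmod (lambda1 eta M beta)"
    unfolding lambda1_eq_larger_root using assms(1-4)
    by (intro sqrt_le_cmod_larger_root trace_fun_nonneg)
  finally show ?thesis .
qed

lemma le_cmod_lambda1_if_root:
  assumes "c\<^sup>2 - trace_fun eta M beta * c + det_fun eta M beta \<le> 0"
  shows "c \<le> cmod (lambda1 eta M beta)"
proof -
  have "c \<le> Re (lambda1 eta M beta)"
    using root_le_Re_larger_root[OF assms] by (simp add: lambda1_eq_larger_root)
  also have "\<dots> \<le> cmod (lambda1 eta M beta)"
    by (rule complex_Re_le_cmod)
  finally show ?thesis .
qed

lemma lambda1_argmin_large_M:
  assumes "0 < eta" "eta \<le> 1" "0 \<le> M" "M \<le> 1" "1 - eta \<le> M"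
  shows "is_arg_min (\<lambda>b. cmod (lambda1 eta M b)) (\<lambda>b. b \<in> {0..1}) (1 - eta / (1 + sqrt M)\<^sup>2)"
proof -
  define s where "s = sqrt M"
  define b0 where "b0 = 1 - eta / (1 + s)\<^sup>2"
  define c where "c = 1 - eta / (1 + s)"
  have s: "0 \<le> s" "s\<^sup>2 = M"
    using assms by (simp_all add: s_def)
  have "1 \<le> (1 + s)\<^sup>2"
    using s by (simp add: one_le_power)
  then have "eta \<le> 1 + s" "eta \<le> (1 + s)\<^sup>2"
    using s assms by linarith+
  then have b0: "b0 \<in> {0..1}" and c: "0 \<le> c"
    using assms by (simp_all add: b0_def c_def)
  have trace0: "trace_fun eta M b0 = 2 * c" and det0: "det_fun eta M b0 = c\<^sup>2"
    using trace_det_at_double_root[OF s(2)] s(1) by (simp_all add: b0_def c_def)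
  have "cmod (lambda1 eta M b0) = c"
    using cmod_lambda1_at_double_root[OF s(2)] s(1) c by (simp add: b0_def c_def)
  moreover have "c \<le> cmod (lambda1 eta M b)" if b: "b \<in> {0..1}" for b
  proof (cases "b \<le> b0")
    case True
    then have "0 \<le> (1 - eta - M) * (b - b0)"
      using assms(5) by (intro mult_nonpos_nonpos) auto
    then have "c\<^sup>2 \<le> det_fun eta M b"
      using det_fun_diff[of eta M b b0] det0 by simp
    then show ?thesis
      using assms b by (intro le_cmod_lambda1_if_sq_le_det) auto
  next
    case False
    then have "2 * c \<le> trace_fun eta M b"
      using trace_fun_mono[of M b0 b eta] assms(4) trace0 by simp
    then show ?thesis
      by (rule le_cmod_lambda1_if_le_half_trace)
  qed
  ultimately show ?thesis
    using b0 by (simp add: is_arg_min_linorder b0_def s_def)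
qed

lemma lambda1_argmin_small_M:
  assumes "0 < eta" "eta \<le> 1" "0 \<le> M" "M \<le> 1" "M \<le> (1 - sqrt eta)\<^sup>2"
  shows "is_arg_min (\<lambda>b. cmod (lambda1 eta M b)) (\<lambda>b. b \<in> {0..1}) (1 - eta / (1 - sqrt M)\<^sup>2)"
proof -
  define s where "s = sqrt M"
  define b0 where "b0 = 1 - eta / (1 - s)\<^sup>2"
  define c where "c = 1 - eta / (1 - s)"
  have s: "0 \<le> s" "(- s)\<^sup>2 = M"
    using assms by (simp_all add: s_def)
  have "eta \<le> sqrt eta"
    using assms(1,2) by (simp add: real_le_rsqrt power2_eq_square mult_le_cancel_left1)
  have "s \<le> 1 - sqrt eta"
    using real_sqrt_le_mono[OF assms(5)] assms(2) by (simp add: s_def)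
  then have "sqrt eta \<le> 1 - s"
    by simp
  then have "eta \<le> (1 - s)\<^sup>2"
    using power_mono[of "sqrt eta" "1 - s" 2] assms(1) by simp
  moreover have "(1 - sqrt eta)\<^sup>2 = 1 - 2 * sqrt eta + eta"
    using assms(1) by (simp add: power2_eq_square algebra_simps)
  ultimately have "0 < 1 - s" "eta \<le> 1 - s" "M \<le> 1 - eta"
    using assms(1,5) \<open>eta \<le> sqrt eta\<close> \<open>sqrt eta \<le> 1 - s\<close> by auto
  then have b0: "b0 \<in> {0..1}" and c: "0 \<le> c"
    using \<open>eta \<le> (1 - s)\<^sup>2\<close> assms(1) by (simp_all add: b0_def c_def)
  have trace0: "trace_fun eta M b0 = 2 * c" and det0: "det_fun eta M b0 = c\<^sup>2"
    using trace_det_at_double_root[OF s(2)] \<open>0 < 1 - s\<close> by (simp_all add: b0_def c_def)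
  have "cmod (lambda1 eta M b0) = c"
    using cmod_lambda1_at_double_root[OF s(2)] \<open>0 < 1 - s\<close> c by (simp add: b0_def c_def)
  moreover have "c \<le> cmod (lambda1 eta M b)" if b: "b \<in> {0..1}" for b
  proof (cases "b0 \<le> b")
    case True
    then have "0 \<le> (1 - eta - M) * (b - b0)"
      using \<open>M \<le> 1 - eta\<close> by simp
    then have "c\<^sup>2 \<le> det_fun eta M b"
      using det_fun_diff[of eta M b b0] det0 by simp
    then show ?thesis
      using assms b by (intro le_cmod_lambda1_if_sq_le_det) auto
  next
    case False
    have slope: "(1 - eta - M) - c * (1 - M) = s * eta"
      using \<open>0 < 1 - s\<close> s(2) by (simp add: c_def field_simps power2_eq_square)
    have "c\<^sup>2 - trace_fun eta M b * c + det_fun eta M b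
            = (c\<^sup>2 - trace_fun eta M b0 * c + det_fun eta M b0)
              + ((1 - eta - M) - c * (1 - M)) * (b - b0)"
      by (simp add: trace_fun_eq det_fun_eq algebra_simps)
    also have "\<dots> = s * eta * (b - b0)"
      using trace0 det0 slope by (simp add: power2_eq_square)
    finally have "c\<^sup>2 - trace_fun eta M b * c + det_fun eta M b \<le> 0"
      using False s(1) assms(1) by (simp add: mult_nonneg_nonpos)
    then show ?thesis
      by (rule le_cmod_lambda1_if_root)
  qed
  ultimately show ?thesis
    using b0 by (simp add: is_arg_min_linorder b0_def s_def)
qed

lemma lambda1_argmin_medium_M:
  assumes "0 < eta" "eta \<le> 1" "0 \<le> M" "M \<le> 1" "(1 - sqrt eta)\<^sup>2 < M" "M \<le> 1 - eta"
  shows "is_arg_min (\<lambda>b. cmod (lambda1 eta M b)) (\<lambda>b. b \<in> {0..1}) 0"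
proof -
  define s where "s = sqrt M"
  have s: "0 \<le> s" "s \<le> 1" "s\<^sup>2 = M"
    using assms by (simp_all add: s_def)
  have "1 - sqrt eta < s"
    using real_sqrt_less_mono[OF assms(5)] assms(2) by (simp add: s_def)
  then have "(1 - s)\<^sup>2 < eta"
    using s(2) assms(1) power_strict_mono[of "1 - s" "sqrt eta" 2] by simp
  have trace0: "trace_fun eta M 0 = (1 - s)\<^sup>2 - eta + 2 * s" and det0: "det_fun eta M 0 = s\<^sup>2"
    using s(3) by (simp_all add: trace_fun_eq det_fun_eq power2_eq_square algebra_simps)
  have "0 \<le> trace_fun eta M 0"
    using assms(2-4) by (rule trace_fun_nonneg) simp
  moreover have "trace_fun eta M 0 \<le> 2 * s"
    using trace0 \<open>(1 - s)\<^sup>2 < eta\<close> by simp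
  ultimately have "(trace_fun eta M 0)\<^sup>2 \<le> 4 * det_fun eta M 0"
    using power_mono[of "trace_fun eta M 0" "2 * s" 2] det0 by (simp add: power_mult_distrib)
  then have "cmod (lambda1 eta M 0) = s"
    using s(1) det0 by (simp add: lambda1_eq_larger_root cmod_larger_root_nonreal)
  moreover have "s \<le> cmod (lambda1 eta M b)" if b: "b \<in> {0..1}" for b
  proof -
    have "0 \<le> (1 - eta - M) * (b - 0)"
      using assms(6) b by simp
    then have "s\<^sup>2 \<le> det_fun eta M b"
      using det_fun_diff[of eta M b 0] det0 by simp
    then show ?thesis
      using assms b by (intro le_cmod_lambda1_if_sq_le_det) auto
  qed
  ultimately show ?thesis
    by (simp add: is_arg_min_linorder)
qed

theorem corollary1p3:
  fixes eta M :: real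
  assumes "0 < eta" "eta \<le> 1" "0 \<le> M" "M \<le> 1"
  shows "(M \<le> (1 - sqrt eta)^2 \<longrightarrow>
            is_arg_min (\<lambda>b. cmod (lambda1 eta M b)) (\<lambda>b. b \<in> {0..1})
              (1 - eta / (1 - sqrt M)^2))
       \<and> ((1 - sqrt eta)^2 < M \<and> M \<le> 1 - eta \<longrightarrow>
            is_arg_min (\<lambda>b. cmod (lambda1 eta M b)) (\<lambda>b. b \<in> {0..1}) 0)
       \<and> (1 - eta \<le> M \<longrightarrow>
            is_arg_min (\<lambda>b. cmod (lambda1 eta M b)) (\<lambda>b. b \<in> {0..1})
              (1 - eta / (1 + sqrt M)^2))"
  using lambda1_argmin_small_M[OF assms] lambda1_argmin_medium_M[OF assms]
    lambda1_argmin_large_M[OF assms]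
  by blast

end
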